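(* If a UE-space $X$ has a $\sigma$-disjoint base, then $X$ has a $\sigma$-strongly point-finite base consisting of cozero-sets.
   Context: "Space" means topological $T_0$-space. A zero-set (cozero-set) of $X$ is $f^{-1}(0)$ (resp. its complement) for continuous $f:X\to[0,1]$. A U-representation of $V\subseteq X$ is a sequence $(U_n(V))_{n\in\mathbb{N}}$ with $V=\bigcup_n U_n(V)$, $U_n(V)\subseteq U_{n+1}(V)$, $U_{2n-1}(V)$ a zero-set, $U_{2n}(V)$ a cozero-set. A family $\alpha$ is an almost subbase of $X$ if U-representations of its members can be chosen so that $\alpha\cup\{X\setminus U_{2n-1}(V):V\in\alpha,n\in\mathbb{N}\}$ is a subbase of $X$. A family is boundedly point-finite if there is an integer $n$ such that any $n+2$ of its members have empty intersection; it is strongly point-finite if every countably infinite subfamily contains a finite subfamily with empty intersection. $\sigma$-P means a countable union of families with property P. A UE-space is a space with a $\sigma$-boundedly point-finite almost subbase. *)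

theory Defs
  imports "HOL-Analysis.Analysis"
begin

definition zero_set :: "'a topology \<Rightarrow> 'a set \<Rightarrow> bool" where
  "zero_set X Z \<longleftrightarrow> (\<exists>f. continuous_map X (top_of_set {0..1::real}) f \<and>
                            Z = {x \<in> topspace X. f x = 0})"

definition cozero_set :: "'a topology \<Rightarrow> 'a set \<Rightarrow> bool" where
  "cozero_set X C \<longleftrightarrow> (\<exists>f. continuous_map X (top_of_set {0..1::real}) f \<and>
                            C = topspace X - {x \<in> topspace X. f x = 0})"

definition U_representation :: "'a topology \<Rightarrow> 'a set \<Rightarrow> (nat \<Rightarrow> 'a set) \<Rightarrow> bool" where
  "U_representation X V U \<longleftrightarrow>
     V = (\<Union>n\<in>{1..}. U n) \<and>
     (\<forall>n\<ge>1. U n \<subseteq> U (Suc n)) \<and>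
     (\<forall>n\<ge>1. zero_set X (U (2*n - 1)) \<and> cozero_set X (U (2*n)))"

definition is_base :: "'a topology \<Rightarrow> 'a set set \<Rightarrow> bool" where
  "is_base X \<B> \<longleftrightarrow> (\<forall>V\<in>\<B>. openin X V) \<and>
     (\<forall>U x. openin X U \<and> x \<in> U \<longrightarrow> (\<exists>V\<in>\<B>. x \<in> V \<and> V \<subseteq> U))"

text \<open>Subbase: finite intersections (empty intersection = whole space) form a base.\<close>
definition is_subbase :: "'a topology \<Rightarrow> 'a set set \<Rightarrow> bool" where
  "is_subbase X \<S> \<longleftrightarrow>
     openin X = arbitrary union_of (finite intersection_of (\<lambda>U. U \<in> \<S>) relative_to topspace X)"

definition almost_subbase :: "'a topology \<Rightarrow> 'a set set \<Rightarrow> bool" where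
  "almost_subbase X \<alpha> \<longleftrightarrow>
     (\<exists>U :: 'a set \<Rightarrow> nat \<Rightarrow> 'a set.
        (\<forall>V\<in>\<alpha>. U_representation X V (U V)) \<and>
        is_subbase X (\<alpha> \<union> {topspace X - U V (2*n - 1) | V n. V \<in> \<alpha> \<and> n \<ge> 1}))"

definition boundedly_point_finite :: "'a set set \<Rightarrow> bool" where
  "boundedly_point_finite \<alpha> \<longleftrightarrow>
     (\<exists>n::nat. \<forall>\<F>. \<F> \<subseteq> \<alpha> \<and> finite \<F> \<and> card \<F> = n + 2 \<longrightarrow> \<Inter>\<F> = {})"

definition strongly_point_finite :: "'a set set \<Rightarrow> bool" where
  "strongly_point_finite \<alpha> \<longleftrightarrow>
     (\<forall>\<beta>. \<beta> \<subseteq> \<alpha> \<and> countable \<beta> \<and> infinite \<beta> \<longrightarrow>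
        (\<exists>\<gamma>. \<gamma> \<subseteq> \<beta> \<and> finite \<gamma> \<and> \<gamma> \<noteq> {} \<and> \<Inter>\<gamma> = {}))"

definition sigma_prop :: "('a set set \<Rightarrow> bool) \<Rightarrow> 'a set set \<Rightarrow> bool" where
  "sigma_prop P \<alpha> \<longleftrightarrow> (\<exists>A :: nat \<Rightarrow> 'a set set. \<alpha> = (\<Union>n. A n) \<and> (\<forall>n. P (A n)))"

definition UE_space :: "'a topology \<Rightarrow> bool" where
  "UE_space X \<longleftrightarrow> t0_space X \<and>
     (\<exists>\<alpha>. almost_subbase X \<alpha> \<and> sigma_prop boundedly_point_finite \<alpha>)"

end

(* Write the almost subbase as a union of boundedly point-finite layers A_0, A_1, ... and the
   base as a union of disjoint families D_0, D_1, ....  For x in V the level of x is the least n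
   with x in U_n(V); the bands U_2j(V) - U_2j-3(V) are cozero-sets which catch every point of a
   given level and only points of nearby levels.  The signature of x relative to the first K
   layers lists the members of A_0, ..., A_K containing x together with the levels of x in them;
   it is finite.  For a basic set B and each K, choose one cozero-set inside B per signature,
   lying in the bands the signature prescribes and containing the whole signature class.  A
   finite intersection of subbasic sets around x shows that x gets such a neighbourhood for
   some K, so these sets form a base.  A centred subfamily of one such choice meets only
   finitely many members of the first K layers (bounded point-finiteness), and in each of them
   the levels of its points differ by at most 3 (meeting bands have nearby indices); so it
   realises finitely many signatures and is finite.  Disjointness of D_i preserves strong
   point-finiteness under the union over B in D_i. *)

theory Submission
  imports Defs
begin

section \<open>Cozero-sets\<close>

lemma continuous_map_unit_interval_iff:
  "continuous_map X (top_of_set {0..1::real}) f \<longleftrightarrow>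
     continuous_map X euclideanreal f \<and> (\<forall>x\<in>topspace X. f x \<in> {0..1})"
  by (auto simp: continuous_map_in_subtopology Pi_iff)

lemma cozero_set_topspace: "cozero_set X (topspace X)"
  unfolding cozero_set_def by (rule exI[of _ "\<lambda>_. 1"]) simp

lemma cozero_set_subset_topspace: "cozero_set X C \<Longrightarrow> C \<subseteq> topspace X"
  unfolding cozero_set_def by blast

lemma cozero_set_Diff_zero_set: "zero_set X Z \<Longrightarrow> cozero_set X (topspace X - Z)"
  unfolding zero_set_def cozero_set_def by blast

lemma cozero_set_Int:
  assumes "cozero_set X A" "cozero_set X B"
  shows "cozero_set X (A \<inter> B)"
proof -
  obtain f g where f: "continuous_map X (top_of_set {0..1::real}) f"
    and g: "continuous_map X (top_of_set {0..1::real}) g"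
    and A: "A = topspace X - {x \<in> topspace X. f x = 0}"
    and B: "B = topspace X - {x \<in> topspace X. g x = 0}"
    using assms unfolding cozero_set_def by blast
  have "continuous_map X (top_of_set {0..1::real}) (\<lambda>x. f x * g x)"
    using f g by (auto simp: continuous_map_unit_interval_iff mult_le_one
                       intro: continuous_map_real_mult)
  moreover have "A \<inter> B = topspace X - {x \<in> topspace X. f x * g x = 0}"
    unfolding A B by auto
  ultimately show ?thesis unfolding cozero_set_def by blast
qed

lemma cozero_set_Inter:
  assumes "finite \<C>" "\<And>C. C \<in> \<C> \<Longrightarrow> cozero_set X C"
  shows "cozero_set X (topspace X \<inter> \<Inter>\<C>)"
  using assms
proof (induction \<C> rule: finite_induct)
  case empty
  then show ?case using cozero_set_topspace by simp
next
  case (insert C \<C>)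
  then have "topspace X \<inter> \<Inter>(insert C \<C>) = C \<inter> (topspace X \<inter> \<Inter>\<C>)"
    using cozero_set_subset_topspace by blast
  then show ?case using insert by (simp add: cozero_set_Int)
qed

lemma openin_cozero_set:
  assumes "cozero_set X C" shows "openin X C"
proof -
  obtain f where f: "continuous_map X (top_of_set {0..1::real}) f"
    and C: "C = topspace X - {x \<in> topspace X. f x = 0}"
    using assms unfolding cozero_set_def by blast
  have "openin X {x \<in> topspace X. f x \<in> -{0}}"
    using f by (intro openin_continuous_map_preimage) (auto simp: continuous_map_unit_interval_iff)
  moreover have "C = {x \<in> topspace X. f x \<in> -{0}}" unfolding C by blast
  ultimately show ?thesis by simp
qed

section \<open>Families of sets\<close>

lemma is_subbase_neighbourhood:
  assumes "is_subbase X \<S>" "openin X B" "x \<in> B"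
  obtains \<F> where "finite \<F>" "\<F> \<subseteq> \<S>" "x \<in> topspace X \<inter> \<Inter>\<F>" "topspace X \<inter> \<Inter>\<F> \<subseteq> B"
proof -
  have "(arbitrary union_of (finite intersection_of (\<lambda>U. U \<in> \<S>) relative_to topspace X)) B"
    using assms(1,2) unfolding is_subbase_def by simp
  then obtain \<W> where \<W>: "\<W> \<subseteq> {W. (finite intersection_of (\<lambda>U. U \<in> \<S>) relative_to topspace X) W}"
    and "\<Union>\<W> = B"
    unfolding union_of_def by auto
  then obtain W where "W \<in> \<W>" "x \<in> W" "W \<subseteq> B" using assms(3) by blast
  then have "(finite intersection_of (\<lambda>U. U \<in> \<S>) relative_to topspace X) W" using \<W> by blast
  then obtain W' where "(finite intersection_of (\<lambda>U. U \<in> \<S>)) W'" "topspace X \<inter> W' = W"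
    unfolding relative_to_def by blast
  then obtain \<F> where "finite \<F>" "\<F> \<subseteq> \<S>" "\<Inter>\<F> = W'"
    unfolding intersection_of_def by auto
  then show thesis using that \<open>x \<in> W\<close> \<open>W \<subseteq> B\<close> \<open>topspace X \<inter> W' = W\<close> by blast
qed

definition centred :: "'a set set \<Rightarrow> bool" where
  "centred \<G> \<longleftrightarrow> (\<forall>\<gamma>. \<gamma> \<subseteq> \<G> \<and> finite \<gamma> \<and> \<gamma> \<noteq> {} \<longrightarrow> \<Inter>\<gamma> \<noteq> {})"

lemma centredD: "centred \<G> \<Longrightarrow> \<gamma> \<subseteq> \<G> \<Longrightarrow> finite \<gamma> \<Longrightarrow> \<gamma> \<noteq> {} \<Longrightarrow> \<Inter>\<gamma> \<noteq> {}"
  unfolding centred_def by meson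

lemma centred_subset: "centred \<G> \<Longrightarrow> \<H> \<subseteq> \<G> \<Longrightarrow> centred \<H>"
  unfolding centred_def by (meson subset_trans)

lemma centred_Int: "centred \<G> \<Longrightarrow> A \<in> \<G> \<Longrightarrow> B \<in> \<G> \<Longrightarrow> A \<inter> B \<noteq> {}"
  using centredD[of \<G> "{A, B}"] by simp

lemma strongly_point_finite_iff_centred:
  "strongly_point_finite \<alpha> \<longleftrightarrow> (\<forall>\<beta>. \<beta> \<subseteq> \<alpha> \<and> countable \<beta> \<and> centred \<beta> \<longrightarrow> finite \<beta>)"
proof
  assume spf: "strongly_point_finite \<alpha>"
  show "\<forall>\<beta>. \<beta> \<subseteq> \<alpha> \<and> countable \<beta> \<and> centred \<beta> \<longrightarrow> finite \<beta>"
  proof (intro allI impI)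
    fix \<beta> assume \<beta>: "\<beta> \<subseteq> \<alpha> \<and> countable \<beta> \<and> centred \<beta>"
    show "finite \<beta>"
    proof (rule ccontr)
      assume "infinite \<beta>"
      then obtain \<gamma> where "\<gamma> \<subseteq> \<beta>" "finite \<gamma>" "\<gamma> \<noteq> {}" "\<Inter>\<gamma> = {}"
        using spf \<beta> unfolding strongly_point_finite_def by meson
      then show False using centredD[of \<beta> \<gamma>] \<beta> by simp
    qed
  qed
next
  assume H: "\<forall>\<beta>. \<beta> \<subseteq> \<alpha> \<and> countable \<beta> \<and> centred \<beta> \<longrightarrow> finite \<beta>"
  show "strongly_point_finite \<alpha>"
    unfolding strongly_point_finite_def
  proof (intro allI impI)
    fix \<beta> assume "\<beta> \<subseteq> \<alpha> \<and> countable \<beta> \<and> infinite \<beta>"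
    then have "\<not> centred \<beta>" using H by meson
    then show "\<exists>\<gamma>\<subseteq>\<beta>. finite \<gamma> \<and> \<gamma> \<noteq> {} \<and> \<Inter>\<gamma> = {}" unfolding centred_def by meson
  qed
qed

lemma boundedly_point_finite_finite_centred:
  assumes "boundedly_point_finite \<A>" "\<T> \<subseteq> \<A>" "centred \<T>"
  shows "finite \<T>"
proof (rule ccontr)
  assume "infinite \<T>"
  obtain n where n: "\<And>\<F>. \<F> \<subseteq> \<A> \<Longrightarrow> finite \<F> \<Longrightarrow> card \<F> = n + 2 \<Longrightarrow> \<Inter>\<F> = {}"
    using assms(1) unfolding boundedly_point_finite_def by blast
  obtain \<G> where \<G>: "finite \<G>" "card \<G> = n + 2" "\<G> \<subseteq> \<T>"
    using infinite_arbitrarily_large[OF \<open>infinite \<T>\<close>] by blast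
  then have "\<G> \<noteq> {}" by auto
  then have "\<Inter>\<G> \<noteq> {}" using centredD[OF assms(3)] \<G> by simp
  moreover have "\<Inter>\<G> = {}" using n \<G> assms(2) by (meson order_trans)
  ultimately show False by simp
qed

lemma boundedly_point_finite_UN_finite_centred:
  fixes \<A> :: "nat \<Rightarrow> 'a set set"
  assumes "\<And>k. boundedly_point_finite (\<A> k)" "\<T> \<subseteq> (\<Union>k\<le>K. \<A> k)" "centred \<T>"
  shows "finite \<T>"
proof -
  have "finite (\<T> \<inter> \<A> k)" for k
    by (rule boundedly_point_finite_finite_centred[OF assms(1)]) (auto intro: centred_subset[OF assms(3)])
  then have "finite (\<Union>k\<le>K. \<T> \<inter> \<A> k)" by (intro finite_UN_I) simp_all
  moreover have "\<T> \<subseteq> (\<Union>k\<le>K. \<T> \<inter> \<A> k)" using assms(2) by auto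
  ultimately show ?thesis by (rule finite_subset[rotated])
qed

text \<open>Members of different pieces of a disjoint family do not meet, so a centred subfamily of the
  union lies in a single \<open>\<F> B\<close>.\<close>
lemma strongly_point_finite_UN_disjoint:
  assumes "disjoint \<D>" "\<And>B. B \<in> \<D> \<Longrightarrow> strongly_point_finite (\<F> B)"
    and "\<And>B N. B \<in> \<D> \<Longrightarrow> N \<in> \<F> B \<Longrightarrow> N \<subseteq> B"
  shows "strongly_point_finite (\<Union>B\<in>\<D>. \<F> B)"
  unfolding strongly_point_finite_iff_centred
proof (intro allI impI)
  fix \<beta> assume \<beta>: "\<beta> \<subseteq> (\<Union>B\<in>\<D>. \<F> B) \<and> countable \<beta> \<and> centred \<beta>"
  show "finite \<beta>"
  proof (cases "\<beta> = {}")
    case False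
    then obtain N\<^sub>0 B\<^sub>0 where N\<^sub>0: "N\<^sub>0 \<in> \<beta>" "B\<^sub>0 \<in> \<D>" "N\<^sub>0 \<in> \<F> B\<^sub>0" using \<beta> by blast
    have "\<beta> \<subseteq> \<F> B\<^sub>0"
    proof
      fix N assume "N \<in> \<beta>"
      then obtain B where B: "B \<in> \<D>" "N \<in> \<F> B" using \<beta> by blast
      have "N \<inter> N\<^sub>0 \<noteq> {}" using centred_Int \<beta> \<open>N \<in> \<beta>\<close> N\<^sub>0(1) by blast
      then have "B = B\<^sub>0" using assms(1,3) B N\<^sub>0 unfolding disjoint_def by blast
      then show "N \<in> \<F> B\<^sub>0" using B by simp
    qed
    then show ?thesis
      using assms(2)[OF N\<^sub>0(2)] \<beta> unfolding strongly_point_finite_iff_centred by blast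
  qed simp
qed

lemma sigma_prop_UN_prod:
  fixes \<F> :: "nat \<Rightarrow> nat \<Rightarrow> 'a set set"
  assumes "\<And>i j. P (\<F> i j)"
  shows "sigma_prop P (\<Union>i j. \<F> i j)"
  unfolding sigma_prop_def
proof (intro exI conjI allI)
  show "(\<Union>i j. \<F> i j) = (\<Union>n. case_prod \<F> (prod_decode n))"
    by (auto, metis prod_encode_inverse split_conv)
  show "P (case_prod \<F> (prod_decode n))" for n
    using assms by (simp split: prod.split)
qed

section \<open>Levels and bands of a U-representation\<close>

definition level :: "(nat \<Rightarrow> 'a set) \<Rightarrow> 'a \<Rightarrow> nat" where
  "level U x = (LEAST n. 1 \<le> n \<and> x \<in> U n)"

text \<open>The band of index \<open>m\<close> is the cozero-set \<open>U\<^sub>2\<^sub>j - U\<^sub>2\<^sub>j\<^sub>-\<^sub>3\<close> with \<open>2j = m + m mod 2\<close>: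
  it contains every point of level \<open>m\<close>, and only points of level between \<open>m - 2\<close> and \<open>m + 1\<close>.\<close>
definition band :: "'a topology \<Rightarrow> (nat \<Rightarrow> 'a set) \<Rightarrow> nat \<Rightarrow> 'a set" where
  "band X U m = U (m + m mod 2) \<inter>
     (if 3 \<le> m then topspace X - U (m + m mod 2 - 3) else topspace X)"

lemma band_indices:
  fixes m :: nat
  shows "1 \<le> m \<Longrightarrow> m + m mod 2 = 2 * ((m + 1) div 2) \<and> 1 \<le> (m + 1) div 2"
    and "3 \<le> m \<Longrightarrow> m + m mod 2 - 3 = 2 * ((m + 1) div 2 - 1) - 1 \<and> 1 \<le> (m + 1) div 2 - 1"
  by presburger+

context
  fixes X :: "'a topology" and V :: "'a set" and U :: "nat \<Rightarrow> 'a set"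
  assumes U_rep: "U_representation X V U"
begin

lemma U_representation_mono:
  assumes "1 \<le> a" "a \<le> b"
  shows "U a \<subseteq> U b"
  using assms(2)
proof (induction b rule: dec_induct)
  case (step n)
  then have "U n \<subseteq> U (Suc n)" using U_rep assms(1) unfolding U_representation_def by simp
  then show ?case using step.IH by blast
qed simp

lemma U_representation_subset: "1 \<le> n \<Longrightarrow> U n \<subseteq> V"
  using U_rep unfolding U_representation_def by auto

lemma cozero_set_U_even: "1 \<le> j \<Longrightarrow> cozero_set X (U (2 * j))"
  using U_rep unfolding U_representation_def by blast

lemma cozero_set_Diff_U_odd: "1 \<le> j \<Longrightarrow> cozero_set X (topspace X - U (2 * j - 1))"
  using U_rep cozero_set_Diff_zero_set unfolding U_representation_def by blast

lemma level_mem: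
  assumes "x \<in> V"
  shows "1 \<le> level U x" "x \<in> U (level U x)"
proof -
  obtain n where "1 \<le> n" "x \<in> U n" using U_rep assms unfolding U_representation_def by auto
  then have "1 \<le> level U x \<and> x \<in> U (level U x)"
    unfolding level_def by (rule LeastI[where P = "\<lambda>n. 1 \<le> n \<and> x \<in> U n", OF conjI])
  then show "1 \<le> level U x" "x \<in> U (level U x)" by auto
qed

lemma mem_U_iff_level:
  assumes "1 \<le> n"
  shows "x \<in> U n \<longleftrightarrow> x \<in> V \<and> level U x \<le> n"
proof
  assume "x \<in> U n"
  then show "x \<in> V \<and> level U x \<le> n"
    using U_representation_subset assms unfolding level_def by (auto intro: Least_le)
next
  assume "x \<in> V \<and> level U x \<le> n"
  then show "x \<in> U n" using level_mem U_representation_mono by blast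
qed

lemma mem_band_iff:
  assumes "1 \<le> m"
  shows "y \<in> band X U m \<longleftrightarrow> y \<in> topspace X \<and> y \<in> V \<and> level U y \<le> m + m mod 2 \<and>
           (3 \<le> m \<longrightarrow> m + m mod 2 - 3 < level U y)"
proof -
  have "U (m + m mod 2) \<subseteq> topspace X"
    using band_indices(1)[OF assms] cozero_set_U_even cozero_set_subset_topspace by metis
  moreover have "1 \<le> m + m mod 2" "3 \<le> m \<Longrightarrow> 1 \<le> m + m mod 2 - 3"
    using assms by presburger+
  ultimately show ?thesis
    unfolding band_def by (auto simp: mem_U_iff_level not_le)
qed

lemma cozero_set_band:
  assumes "1 \<le> m"
  shows "cozero_set X (band X U m)"
proof -
  have even: "cozero_set X (U (m + m mod 2))"
    using band_indices(1)[OF assms] cozero_set_U_even by metis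
  show ?thesis
  proof (cases "3 \<le> m")
    case True
    then have "cozero_set X (topspace X - U (m + m mod 2 - 3))"
      using band_indices(2) cozero_set_Diff_U_odd by metis
    then show ?thesis using True even by (simp add: band_def cozero_set_Int)
  next
    case False
    then show ?thesis
      using even cozero_set_subset_topspace[OF even] by (simp add: band_def Int_absorb2)
  qed
qed

lemma band_subset: "1 \<le> m \<Longrightarrow> band X U m \<subseteq> V"
  using mem_band_iff by blast

lemma mem_band_level:
  assumes "y \<in> topspace X" "y \<in> V"
  shows "y \<in> band X U (level U y)"
proof -
  have "1 \<le> level U y" using level_mem assms(2) by blast
  moreover from this have "level U y + level U y mod 2 - 3 < level U y" by presburger
  ultimately show ?thesis using assms by (simp add: mem_band_iff)
qed

lemma band_overlap_index_bound:
  assumes "1 \<le> m\<^sub>0" "1 \<le> m" "y \<in> band X U m\<^sub>0" "y \<in> band X U m"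
  shows "m \<le> m\<^sub>0 + 3"
proof -
  have "level U y \<le> m\<^sub>0 + m\<^sub>0 mod 2" "3 \<le> m \<longrightarrow> m + m mod 2 - 3 < level U y"
    using assms by (simp_all add: mem_band_iff)
  moreover have "m\<^sub>0 mod 2 < 2" by simp
  ultimately show ?thesis by linarith
qed

end

section \<open>Adapted neighbourhoods\<close>

locale UE_structure =
  fixes X :: "'a topology" and U :: "'a set \<Rightarrow> nat \<Rightarrow> 'a set" and \<A> :: "nat \<Rightarrow> 'a set set"
  assumes representation: "\<And>V k. V \<in> \<A> k \<Longrightarrow> U_representation X V (U V)"
    and subbase: "is_subbase X ((\<Union>k. \<A> k) \<union>
                    {topspace X - U V (2*n - 1) | V n. V \<in> (\<Union>k. \<A> k) \<and> n \<ge> 1})"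
    and layers_boundedly_point_finite: "\<And>k. boundedly_point_finite (\<A> k)"
begin

abbreviation layers :: "nat \<Rightarrow> 'a set set" where
  "layers K \<equiv> \<Union>k\<le>K. \<A> k"

definition signature :: "nat \<Rightarrow> 'a \<Rightarrow> ('a set \<times> nat) set" where
  "signature K x = (\<lambda>V. (V, level (U V) x)) ` {V \<in> layers K. x \<in> V}"

definition adapted :: "'a set \<Rightarrow> nat \<Rightarrow> ('a set \<times> nat) set \<Rightarrow> 'a set \<Rightarrow> bool" where
  "adapted B K \<sigma> N \<longleftrightarrow> N \<subseteq> B \<and> cozero_set X N \<and> (\<forall>V m. (V, m) \<in> \<sigma> \<longrightarrow> N \<subseteq> band X (U V) m) \<and>
     (\<forall>y\<in>topspace X. signature K y = \<sigma> \<longrightarrow> y \<in> N)"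

text \<open>Neighbourhoods are chosen per signature, not per point; this is what keeps each
  \<open>adapted_family B K\<close> strongly point-finite.\<close>
definition adapted_nbhd :: "'a set \<Rightarrow> nat \<Rightarrow> ('a set \<times> nat) set \<Rightarrow> 'a set" where
  "adapted_nbhd B K \<sigma> = (SOME N. adapted B K \<sigma> N)"

definition adapted_family :: "'a set \<Rightarrow> nat \<Rightarrow> 'a set set" where
  "adapted_family B K =
     {adapted_nbhd B K (signature K x) | x. x \<in> B \<and> (\<exists>N. adapted B K (signature K x) N)}"

lemma layers_representation: "V \<in> layers K \<Longrightarrow> U_representation X V (U V)"
  using representation by blast

lemma mem_signature_iff: "(V, m) \<in> signature K x \<longleftrightarrow> V \<in> layers K \<and> x \<in> V \<and> m = level (U V) x"
  unfolding signature_def by auto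

lemma finite_signature: "finite (signature K x)"
proof -
  have "finite {V \<in> layers K. x \<in> V}"
    by (rule boundedly_point_finite_UN_finite_centred[OF layers_boundedly_point_finite])
      (auto simp: centred_def)
  then show ?thesis unfolding signature_def by simp
qed

lemma signature_eq_imp_level_eq:
  assumes "signature K y = signature K x" "V \<in> layers K" "x \<in> V"
  shows "y \<in> V" "level (U V) y = level (U V) x"
proof -
  have "(V, level (U V) x) \<in> signature K y" using assms by (simp add: mem_signature_iff)
  then show "y \<in> V" "level (U V) y = level (U V) x" by (simp_all add: mem_signature_iff)
qed

lemma signature_eq_imp_mem_U_iff:
  assumes "signature K x = signature K y" "V \<in> layers K" "1 \<le> n"
  shows "x \<in> U V n \<longleftrightarrow> y \<in> U V n"
proof -
  have "x \<in> V \<and> level (U V) x \<le> n \<longleftrightarrow> y \<in> V \<and> level (U V) y \<le> n"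
  proof (cases "y \<in> V")
    case True
    then show ?thesis using signature_eq_imp_level_eq[OF assms(1) assms(2)] by metis
  next
    case False
    then show ?thesis using signature_eq_imp_level_eq(1)[OF assms(1)[symmetric] assms(2)] by blast
  qed
  then show ?thesis using mem_U_iff_level[OF layers_representation[OF assms(2)] assms(3)] by simp
qed

definition signature_nbhd :: "nat \<Rightarrow> 'a \<Rightarrow> 'a set" where
  "signature_nbhd K x = topspace X \<inter> \<Inter>((\<lambda>(V, m). band X (U V) m) ` signature K x)"

lemma cozero_set_signature_nbhd: "cozero_set X (signature_nbhd K x)"
  unfolding signature_nbhd_def
proof (rule cozero_set_Inter)
  show "finite ((\<lambda>(V, m). band X (U V) m) ` signature K x)" by (simp add: finite_signature)
next
  fix C assume "C \<in> (\<lambda>(V, m). band X (U V) m) ` signature K x"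
  then obtain V m where "(V, m) \<in> signature K x" "C = band X (U V) m" by auto
  then have "V \<in> layers K" "x \<in> V" "C = band X (U V) (level (U V) x)"
    by (simp_all add: mem_signature_iff)
  then show "cozero_set X C"
    using cozero_set_band[OF layers_representation level_mem(1)[OF layers_representation]] by blast
qed

lemma signature_nbhd_subset_band: "(V, m) \<in> signature K x \<Longrightarrow> signature_nbhd K x \<subseteq> band X (U V) m"
  unfolding signature_nbhd_def by force

lemma signature_nbhd_subset:
  assumes "V \<in> layers K" "x \<in> V"
  shows "signature_nbhd K x \<subseteq> V"
proof -
  have "signature_nbhd K x \<subseteq> band X (U V) (level (U V) x)"
    using assms by (intro signature_nbhd_subset_band) (simp add: mem_signature_iff)
  also have "\<dots> \<subseteq> V"
    using layers_representation[OF assms(1)] assms(2) by (intro band_subset level_mem(1))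
  finally show ?thesis .
qed

lemma mem_signature_nbhd:
  assumes "y \<in> topspace X" "signature K y = signature K x"
  shows "y \<in> signature_nbhd K x"
  unfolding signature_nbhd_def
proof (intro IntI InterI assms(1))
  fix C assume "C \<in> (\<lambda>(V, m). band X (U V) m) ` signature K x"
  then obtain V m where Vm: "(V, m) \<in> signature K x" "C = band X (U V) m" by auto
  then have V: "V \<in> layers K" "x \<in> V" "m = level (U V) x" by (simp_all add: mem_signature_iff)
  have "y \<in> band X (U V) (level (U V) y)"
    using layers_representation[OF V(1)] assms(1) signature_eq_imp_level_eq(1)[OF assms(2) V(1,2)]
    by (rule mem_band_level)
  then show "y \<in> C" using Vm(2) V(3) signature_eq_imp_level_eq(2)[OF assms(2) V(1,2)] by simp
qed

lemma finite_subfamily_in_layers: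
  assumes "finite \<F>"
    and "\<F> \<subseteq> (\<Union>k. \<A> k) \<union> {topspace X - U V (2*n - 1) | V n. V \<in> (\<Union>k. \<A> k) \<and> n \<ge> 1}"
  obtains K where "\<And>S. S \<in> \<F> \<Longrightarrow> S \<in> layers K \<or>
                     (\<exists>V\<in>layers K. \<exists>n\<ge>1. S = topspace X - U V (2*n - 1))"
proof -
  have "\<exists>k. S \<in> \<A> k \<or> (\<exists>V\<in>\<A> k. \<exists>n\<ge>1. S = topspace X - U V (2*n - 1))" if "S \<in> \<F>" for S
    using assms(2) that by blast
  then obtain kf where kf: "\<And>S. S \<in> \<F> \<Longrightarrow>
      S \<in> \<A> (kf S) \<or> (\<exists>V\<in>\<A> (kf S). \<exists>n\<ge>1. S = topspace X - U V (2*n - 1))"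
    by (metis (no_types))
  show thesis
  proof (rule that)
    fix S assume "S \<in> \<F>"
    then have "kf S \<in> {..\<Sum>S\<in>\<F>. kf S}" using assms(1) by (simp add: member_le_sum)
    then show "S \<in> layers (\<Sum>S\<in>\<F>. kf S) \<or>
        (\<exists>V\<in>layers (\<Sum>S\<in>\<F>. kf S). \<exists>n\<ge>1. S = topspace X - U V (2*n - 1))"
      using kf[OF \<open>S \<in> \<F>\<close>] by blast
  qed
qed

text \<open>Subbasic sets of the form \<open>V\<close> are not cozero-sets; they are replaced by the band of \<open>x\<close>
  in \<open>V\<close>.\<close>
lemma adapted_exists:
  assumes "openin X B" "x \<in> B"
  obtains K N where "adapted B K (signature K x) N"
proof -
  obtain \<F> where \<F>: "finite \<F>"
      "\<F> \<subseteq> (\<Union>k. \<A> k) \<union> {topspace X - U V (2*n - 1) | V n. V \<in> (\<Union>k. \<A> k) \<and> n \<ge> 1}"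
      "x \<in> topspace X \<inter> \<Inter>\<F>" "topspace X \<inter> \<Inter>\<F> \<subseteq> B"
    by (rule is_subbase_neighbourhood[OF subbase assms])
  obtain K where K: "\<And>S. S \<in> \<F> \<Longrightarrow> S \<in> layers K \<or>
                     (\<exists>V\<in>layers K. \<exists>n\<ge>1. S = topspace X - U V (2*n - 1))"
    using finite_subfamily_in_layers[OF \<F>(1,2)] by blast
  have x: "\<And>S. S \<in> \<F> \<Longrightarrow> x \<in> S" using \<F>(3) by blast
  have complement: "\<exists>V n. V \<in> layers K \<and> 1 \<le> n \<and> S = topspace X - U V (2*n - 1)"
    if "S \<in> \<F> - layers K" for S
    using K[of S] that by blast
  define N where "N = signature_nbhd K x \<inter> (topspace X \<inter> \<Inter>(\<F> - layers K))"
  have "cozero_set X S" if S: "S \<in> \<F> - layers K" for S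
  proof -
    obtain V n where V: "V \<in> layers K" "1 \<le> n" "S = topspace X - U V (2*n - 1)"
      using complement[OF S] by blast
    have "cozero_set X (topspace X - U V (2*n - 1))"
      by (rule cozero_set_Diff_U_odd[OF layers_representation[OF V(1)] V(2)])
    then show ?thesis using V(3) by simp
  qed
  then have "cozero_set X (topspace X \<inter> \<Inter>(\<F> - layers K))"
    using \<F>(1) by (intro cozero_set_Inter) auto
  then have "cozero_set X N" unfolding N_def by (rule cozero_set_Int[OF cozero_set_signature_nbhd])
  moreover have "N \<subseteq> B"
  proof -
    have "N \<subseteq> S" if "S \<in> \<F>" for S
    proof (cases "S \<in> layers K")
      case True
      then show ?thesis using signature_nbhd_subset[OF True x[OF that]] unfolding N_def by blast
    next
      case False
      then show ?thesis unfolding N_def using that by blast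
    qed
    moreover have "N \<subseteq> topspace X" unfolding N_def by blast
    ultimately have "N \<subseteq> topspace X \<inter> \<Inter>\<F>" by blast
    then show ?thesis using \<F>(4) by (rule subset_trans)
  qed
  moreover have "N \<subseteq> band X (U V) m" if "(V, m) \<in> signature K x" for V m
    using signature_nbhd_subset_band[OF that] unfolding N_def by blast
  moreover have "y \<in> N" if y: "y \<in> topspace X" "signature K y = signature K x" for y
  proof -
    have "y \<in> S" if S: "S \<in> \<F> - layers K" for S
    proof -
      obtain V n where V: "V \<in> layers K" "1 \<le> n" "S = topspace X - U V (2*n - 1)"
        using complement[OF S] by blast
      moreover have "x \<notin> U V (2*n - 1)" using x S V(3) by blast
      ultimately show ?thesis using y signature_eq_imp_mem_U_iff[OF y(2) V(1)] by simp
    qed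
    then show ?thesis unfolding N_def using y(1) mem_signature_nbhd[OF y] by blast
  qed
  ultimately show thesis using that unfolding adapted_def by blast
qed

lemma adapted_adapted_nbhd: "adapted B K \<sigma> N \<Longrightarrow> adapted B K \<sigma> (adapted_nbhd B K \<sigma>)"
  unfolding adapted_nbhd_def by (rule someI)

lemma adapted_family_subset_cozero:
  assumes "N \<in> adapted_family B K"
  shows "N \<subseteq> B" "cozero_set X N"
proof -
  obtain x N' where "N = adapted_nbhd B K (signature K x)" "adapted B K (signature K x) N'"
    using assms unfolding adapted_family_def by blast
  then have "adapted B K (signature K x) N" using adapted_adapted_nbhd by simp
  then show "N \<subseteq> B" "cozero_set X N" unfolding adapted_def by blast+
qed

lemma adapted_nbhd_subset_band:
  assumes "adapted B K (signature K x) N" "V \<in> layers K" "x \<in> V"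
  shows "adapted_nbhd B K (signature K x) \<subseteq> band X (U V) (level (U V) x)"
proof -
  have "(V, level (U V) x) \<in> signature K x" using assms(2,3) by (simp add: mem_signature_iff)
  then show ?thesis using adapted_adapted_nbhd[OF assms(1)] unfolding adapted_def by blast
qed

lemma adapted_nbhd_subset:
  assumes "adapted B K (signature K x) N" "V \<in> layers K" "x \<in> V"
  shows "adapted_nbhd B K (signature K x) \<subseteq> V"
proof -
  have "band X (U V) (level (U V) x) \<subseteq> V"
    using layers_representation[OF assms(2)] assms(3) by (intro band_subset level_mem(1))
  then show ?thesis using adapted_nbhd_subset_band[OF assms] by blast
qed

context
  fixes B :: "'a set" and K :: nat and Z :: "'a set"
  assumes Z_adapted: "\<And>x. x \<in> Z \<Longrightarrow> \<exists>N. adapted B K (signature K x) N"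
    and Z_centred: "centred ((\<lambda>x. adapted_nbhd B K (signature K x)) ` Z)"
begin

lemma finite_layer_members_meeting: "finite {V \<in> layers K. \<exists>x\<in>Z. x \<in> V}"
proof (rule boundedly_point_finite_UN_finite_centred[OF layers_boundedly_point_finite])
  show "{V \<in> layers K. \<exists>x\<in>Z. x \<in> V} \<subseteq> layers K" by blast
  show "centred {V \<in> layers K. \<exists>x\<in>Z. x \<in> V}"
    unfolding centred_def
  proof (intro allI impI)
    fix \<G> assume \<G>: "\<G> \<subseteq> {V \<in> layers K. \<exists>x\<in>Z. x \<in> V} \<and> finite \<G> \<and> \<G> \<noteq> {}"
    then have "\<forall>V\<in>\<G>. \<exists>x. x \<in> Z \<and> x \<in> V" by blast
    then obtain pt where pt: "\<And>V. V \<in> \<G> \<Longrightarrow> pt V \<in> Z \<and> pt V \<in> V"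
      using bchoice by metis
    let ?\<gamma> = "(\<lambda>V. adapted_nbhd B K (signature K (pt V))) ` \<G>"
    have "\<Inter>?\<gamma> \<noteq> {}" using \<G> pt by (intro centredD[OF Z_centred]) auto
    moreover have "adapted_nbhd B K (signature K (pt V)) \<subseteq> V" if V: "V \<in> \<G>" for V
    proof -
      obtain N where "adapted B K (signature K (pt V)) N" using Z_adapted pt[OF V] by blast
      then show ?thesis using adapted_nbhd_subset \<G> pt[OF V] V by blast
    qed
    then have "\<Inter>?\<gamma> \<subseteq> \<Inter>\<G>" by blast
    ultimately show "\<Inter>\<G> \<noteq> {}" by blast
  qed
qed

text \<open>Two points of \<open>Z\<close> in \<open>V\<close> have meeting neighbourhoods inside the bands of their levels.\<close>
lemma level_le_level_plus_3:
  assumes "V \<in> layers K" "x \<in> Z" "x \<in> V" "x' \<in> Z" "x' \<in> V"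
  shows "level (U V) x \<le> level (U V) x' + 3"
proof -
  have rep: "U_representation X V (U V)" by (rule layers_representation[OF assms(1)])
  obtain N N' where "adapted B K (signature K x) N" "adapted B K (signature K x') N'"
    using Z_adapted assms(2,4) by blast
  then have bands: "adapted_nbhd B K (signature K x) \<subseteq> band X (U V) (level (U V) x)"
      "adapted_nbhd B K (signature K x') \<subseteq> band X (U V) (level (U V) x')"
    using adapted_nbhd_subset_band assms by blast+
  have "adapted_nbhd B K (signature K x) \<inter> adapted_nbhd B K (signature K x') \<noteq> {}"
    using assms(2,4) by (intro centred_Int[OF Z_centred]) auto
  then obtain y where "y \<in> band X (U V) (level (U V) x')" "y \<in> band X (U V) (level (U V) x)"
    using bands by blast
  then show ?thesis
    using band_overlap_index_bound[OF rep level_mem(1)[OF rep] level_mem(1)[OF rep]] assms(3,5) by blast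
qed

lemma finite_signatures: "finite (signature K ` Z)"
proof -
  define \<T> where "\<T> = {V \<in> layers K. \<exists>x\<in>Z. x \<in> V}"
  have "\<forall>V\<in>\<T>. \<exists>x. x \<in> Z \<and> x \<in> V" unfolding \<T>_def by blast
  then obtain pt where pt: "\<And>V. V \<in> \<T> \<Longrightarrow> pt V \<in> Z \<and> pt V \<in> V"
    using bchoice by metis
  define bound where "bound = (\<Sum>V\<in>\<T>. level (U V) (pt V) + 3)"
  have "finite \<T>" unfolding \<T>_def by (rule finite_layer_members_meeting)
  have "signature K x \<subseteq> \<T> \<times> {..bound}" if "x \<in> Z" for x
  proof
    fix p assume "p \<in> signature K x"
    then obtain V where V: "V \<in> layers K" "x \<in> V" "p = (V, level (U V) x)"
      unfolding signature_def by blast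
    then have "V \<in> \<T>" using that unfolding \<T>_def by blast
    have "level (U V) x \<le> level (U V) (pt V) + 3"
      using pt[OF \<open>V \<in> \<T>\<close>] by (intro level_le_level_plus_3[OF V(1) that V(2)]) auto
    also have "\<dots> \<le> bound"
      unfolding bound_def using \<open>finite \<T>\<close> \<open>V \<in> \<T>\<close> by (intro member_le_sum) auto
    finally show "p \<in> \<T> \<times> {..bound}" using V(3) \<open>V \<in> \<T>\<close> by simp
  qed
  then have "signature K ` Z \<subseteq> Pow (\<T> \<times> {..bound})" by blast
  moreover have "finite (Pow (\<T> \<times> {..bound}))" using \<open>finite \<T>\<close> by simp
  ultimately show ?thesis by (rule finite_subset)
qed

end

text \<open>A centred subfamily is the image of a set \<open>Z\<close> of points under the choice of adapted
  neighbourhoods, which factors through the finitely many signatures realised on \<open>Z\<close>.\<close>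
lemma strongly_point_finite_adapted_family: "strongly_point_finite (adapted_family B K)"
  unfolding strongly_point_finite_iff_centred
proof (intro allI impI)
  fix \<beta> assume \<beta>: "\<beta> \<subseteq> adapted_family B K \<and> countable \<beta> \<and> centred \<beta>"
  define Z where "Z = {x \<in> B. (\<exists>N. adapted B K (signature K x) N) \<and> adapted_nbhd B K (signature K x) \<in> \<beta>}"
  have \<beta>_eq: "\<beta> = (\<lambda>x. adapted_nbhd B K (signature K x)) ` Z"
    using \<beta> unfolding Z_def adapted_family_def by blast
  have "centred ((\<lambda>x. adapted_nbhd B K (signature K x)) ` Z)"
    unfolding \<beta>_eq[symmetric] using \<beta> by blast
  then have "finite (signature K ` Z)"
    by (rule finite_signatures[rotated]) (auto simp: Z_def)
  then have "finite (adapted_nbhd B K ` signature K ` Z)" by (rule finite_imageI)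
  then show "finite \<beta>" unfolding \<beta>_eq by (simp add: image_image)
qed

lemma is_base_adapted_families:
  assumes "is_base X \<B>"
  shows "is_base X (\<Union>B\<in>\<B>. \<Union>K. adapted_family B K)"
  unfolding is_base_def
proof (intro conjI allI impI ballI)
  fix N assume "N \<in> (\<Union>B\<in>\<B>. \<Union>K. adapted_family B K)"
  then obtain B K where "N \<in> adapted_family B K" by blast
  then show "openin X N" by (intro openin_cozero_set adapted_family_subset_cozero(2))
next
  fix W x assume "openin X W \<and> x \<in> W"
  then obtain B where B: "B \<in> \<B>" "x \<in> B" "B \<subseteq> W" using assms unfolding is_base_def by blast
  then have "openin X B" using assms unfolding is_base_def by blast
  then obtain K N where N: "adapted B K (signature K x) N" using adapted_exists B(2) by blast
  define M where "M = adapted_nbhd B K (signature K x)"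
  have "M \<in> (\<Union>B\<in>\<B>. \<Union>K. adapted_family B K)"
    unfolding M_def adapted_family_def using B(1,2) N by blast
  moreover have M: "adapted B K (signature K x) M" unfolding M_def by (rule adapted_adapted_nbhd[OF N])
  moreover have "x \<in> topspace X" using \<open>openin X B\<close> B(2) openin_subset by blast
  then have "x \<in> M" using M unfolding adapted_def by blast
  moreover have "M \<subseteq> W" using M B(3) unfolding adapted_def by blast
  ultimately show "\<exists>M\<in>(\<Union>B\<in>\<B>. \<Union>K. adapted_family B K). x \<in> M \<and> M \<subseteq> W" by blast
qed

end

theorem corollary5p11:
  fixes X :: "'a topology"
  assumes "UE_space X"
    and "\<exists>\<B>. is_base X \<B> \<and> sigma_prop disjoint \<B>"
  shows "\<exists>\<B>. is_base X \<B> \<and> (\<forall>V\<in>\<B>. cozero_set X V) \<and>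
             sigma_prop strongly_point_finite \<B>"
proof -
  obtain \<alpha> where "almost_subbase X \<alpha>" "sigma_prop boundedly_point_finite \<alpha>"
    using assms(1) unfolding UE_space_def by blast
  obtain U where U: "\<forall>V\<in>\<alpha>. U_representation X V (U V)"
      "is_subbase X (\<alpha> \<union> {topspace X - U V (2*n - 1) | V n. V \<in> \<alpha> \<and> n \<ge> 1})"
    using \<open>almost_subbase X \<alpha>\<close> unfolding almost_subbase_def by blast
  obtain \<A> :: "nat \<Rightarrow> 'a set set"
    where \<A>: "\<alpha> = (\<Union>k. \<A> k)" "\<And>k. boundedly_point_finite (\<A> k)"
    using \<open>sigma_prop boundedly_point_finite \<alpha>\<close> unfolding sigma_prop_def by blast
  interpret UE_structure X U \<A>
  proof
    show "U_representation X V (U V)" if "V \<in> \<A> k" for V k using U(1) \<A>(1) that by blast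
  qed (use U(2) \<A> in simp_all)
  obtain \<B> where "is_base X \<B>" "sigma_prop disjoint \<B>" using assms(2) by blast
  obtain \<D> :: "nat \<Rightarrow> 'a set set" where \<D>: "\<B> = (\<Union>i. \<D> i)" "\<And>i. disjoint (\<D> i)"
    using \<open>sigma_prop disjoint \<B>\<close> unfolding sigma_prop_def by blast
  define \<R> where "\<R> = (\<Union>i K. \<Union>B\<in>\<D> i. adapted_family B K)"
  have "\<R> = (\<Union>B\<in>\<B>. \<Union>K. adapted_family B K)" unfolding \<R>_def \<D>(1) by blast
  then have "is_base X \<R>" using is_base_adapted_families[OF \<open>is_base X \<B>\<close>] by simp
  moreover have "\<forall>V\<in>\<R>. cozero_set X V" unfolding \<R>_def using adapted_family_subset_cozero(2) by blast
  moreover have "sigma_prop strongly_point_finite \<R>"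
    unfolding \<R>_def
  proof (rule sigma_prop_UN_prod[where \<F> = "\<lambda>i K. \<Union>B\<in>\<D> i. adapted_family B K"])
    fix i K show "strongly_point_finite (\<Union>B\<in>\<D> i. adapted_family B K)"
      using \<D>(2) strongly_point_finite_adapted_family adapted_family_subset_cozero(1)
      by (rule strongly_point_finite_UN_disjoint)
  qed
  ultimately show ?thesis by blast
qed

end
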